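(* There exists a homeomorphism $T\colon\mathscr C\to\mathscr C$ of the Cantor set $\mathscr C$ which is almost totally minimal: $T$ has exactly one fixed point $x^0\in\mathscr C$, and for every $x\in\mathscr C\setminus\{x^0\}$ and every $m\in\mathbb N$, the set $\{T^{mk}(x):k\in\mathbb Z\}$ is dense in $\mathscr C$. *)

theory Defs
  imports "HOL-Analysis.Analysis"
begin

definition cantor_set :: "real set" where
  "cantor_set = {x. \<exists>d::nat \<Rightarrow> nat. (\<forall>n. d n \<in> {0, 2}) \<and>
                      x = (\<Sum>n. real (d n) / 3 ^ Suc n)}"

definition int_iter :: "('a \<Rightarrow> 'a) \<Rightarrow> ('a \<Rightarrow> 'a) \<Rightarrow> int \<Rightarrow> 'a \<Rightarrow> 'a" where
  "int_iter T S k = (if k \<ge> 0 then T ^^ nat k else S ^^ nat (- k))"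

end

theory Submission
  imports Defs "HOL-Library.Nat_Bijection"
begin

text \<open>
  Let \<open>B\<^sub>0 = 1\<close> and \<open>B\<^sub>n\<^sub>+\<^sub>1 = B\<^sub>n 0\<^sup>s B\<^sub>n\<close>, where the gap is chosen so that the second copy
  starts at \<open>a\<^sub>n = (n+2)! |B\<^sub>n| + 1\<close>, which is \<open>1\<close> modulo every \<open>m \<le> n + 2\<close>. Let \<open>X\<close> be the
  two-sided subshift of all sequences whose finite windows occur in some \<open>B\<^sub>n\<close>. Since no \<open>B\<^sub>n\<close>
  has two adjacent ones, the zero sequence is the only fixed point of the shift on \<open>X\<close>. Every
  other point of \<open>X\<close> contains a one and hence a copy of every \<open>B\<^sub>N\<close>; as \<open>B\<^sub>N\<^sub>+\<^sub>m\<close> contains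
  copies of \<open>B\<^sub>N\<close> starting in every residue class modulo \<open>m\<close>, its orbit under the \<open>m\<close>-th power
  of the shift is dense.

  \<open>X\<close> is closed and perfect. Coding \<open>\<int>\<close> by \<open>\<nat>\<close> and splitting \<open>X\<close> repeatedly at the first
  coordinate where the current piece branches identifies \<open>X\<close> homeomorphically with \<open>{0,1}\<^sup>\<nat>\<close>,
  and ternary expansion identifies \<open>{0,1}\<^sup>\<nat>\<close> with the Cantor set; the shift becomes the
  required homeomorphism.
\<close>

section \<open>Block words\<close>

fun block_len :: "nat \<Rightarrow> nat" where
  "block_len 0 = 1"
| "block_len (Suc n) = fact (n + 2) * block_len n + 1 + block_len n"

definition block_period :: "nat \<Rightarrow> nat" where
  "block_period n = fact (n + 2) * block_len n + 1"

primrec block :: "nat \<Rightarrow> bool list" where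
  "block 0 = [True]"
| "block (Suc n) = block n @ replicate (block_period n - block_len n) False @ block n"

declare block_len.simps(2) [simp del] block.simps(2) [simp del]

lemma block_len_pos: "block_len n \<ge> 1"
  by (induction n) (auto simp: block_len.simps(2))

lemma block_period_ge: "block_period n \<ge> block_len n + n + 2"
proof -
  have "(n + 2) * block_len n \<le> fact (n + 2) * block_len n"
    using fact_ge_self by (rule mult_le_mono1)
  moreover have "(n + 2) * block_len n = n * block_len n + 2 * block_len n"
    by (simp add: algebra_simps)
  moreover have "n * block_len n \<ge> n"
    using block_len_pos[of n] by simp
  ultimately show ?thesis
    using block_len_pos[of n] unfolding block_period_def by linarith
qed

lemma block_len_Suc: "block_len (Suc n) = block_period n + block_len n"
  by (simp add: block_period_def block_len.simps(2))

lemma length_block [simp]: "length (block n) = block_len n"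
proof (induction n)
  case (Suc n)
  then show ?case
    using block_period_ge[of n] by (simp add: block.simps(2) block_len_Suc)
qed simp

lemma nth_block_Suc:
  assumes "i < block_len (Suc n)"
  shows "block (Suc n) ! i =
    (if i < block_len n then block n ! i else block_period n \<le> i \<and> block n ! (i - block_period n))"
proof -
  have "block_len n \<le> block_period n"
    using block_period_ge[of n] by linarith
  then show ?thesis
    using assms by (auto simp: block.simps(2) block_len_Suc nth_append)
qed

lemma block_len_less_Suc: "block_len n < block_len (Suc n)"
  using block_period_ge[of n] by (simp add: block_len_Suc)

lemma block_len_strict_mono: "strict_mono block_len"
  using block_len_less_Suc by (rule strict_monoI_Suc)

lemma block_len_ge: "block_len n \<ge> n + 1"
proof (induction n)
  case (Suc n)
  then show ?case using block_len_less_Suc[of n] by simp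
qed simp

lemma block_prefix: "n \<le> m \<Longrightarrow> i < block_len n \<Longrightarrow> block m ! i = block n ! i"
proof (induction m rule: dec_induct)
  case (step m)
  have "block_len n \<le> block_len m"
    using step(1) strict_mono_leD[OF block_len_strict_mono] by blast
  with step show ?case by (simp add: nth_block_Suc block_len_Suc)
qed simp

lemma block_no_adjacent_trues: "i + 1 < block_len n \<Longrightarrow> \<not> (block n ! i \<and> block n ! (i + 1))"
proof (induction n arbitrary: i)
  case (Suc n)
  have gap: "block_len n + 1 < block_period n"
    using block_period_ge[of n] by linarith
  consider "i + 1 < block_len n" | "block_len n \<le> i + 1" "i < block_period n" | "block_period n \<le> i"
    by linarith
  then show ?case
  proof cases
    case 1
    then show ?thesis using Suc by (simp add: nth_block_Suc)
  next
    case 2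
    then show ?thesis using Suc.prems gap by (auto simp: nth_block_Suc)
  next
    case 3
    then have "i - block_period n + 1 < block_len n" "i + 1 - block_period n = i - block_period n + 1"
      using Suc.prems by (auto simp: block_len_Suc)
    then show ?thesis using 3 Suc.prems Suc.IH[of "i - block_period n"] gap
      by (simp add: nth_block_Suc)
  qed
qed simp

definition occurs_at :: "nat \<Rightarrow> nat \<Rightarrow> nat \<Rightarrow> bool" where
  "occurs_at N n c \<longleftrightarrow> c + block_len N \<le> block_len n \<and> (\<forall>j<block_len N. block n ! (c + j) = block N ! j)"

lemma occurs_at_refl: "occurs_at N N 0"
  by (simp add: occurs_at_def)

lemma occurs_at_Suc_first: "occurs_at N n c \<Longrightarrow> occurs_at N (Suc n) c"
  by (auto simp: occurs_at_def nth_block_Suc block_len_Suc)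

lemma occurs_at_Suc_second: "occurs_at N n c \<Longrightarrow> occurs_at N (Suc n) (c + block_period n)"
  using block_period_ge[of n] by (auto simp: occurs_at_def nth_block_Suc block_len_Suc)

lemma occurs_at_0: "N \<le> n \<Longrightarrow> occurs_at N n 0"
  by (induction n rule: dec_induct) (auto intro: occurs_at_refl occurs_at_Suc_first)

lemma occurs_at_trans: "occurs_at n n' c \<Longrightarrow> occurs_at N n d \<Longrightarrow> occurs_at N n' (c + d)"
  by (fastforce simp: occurs_at_def add.assoc)

lemma true_in_occurrence:
  assumes "N \<le> n" "i < block_len n" "block n ! i"
  shows "\<exists>c. occurs_at N n c \<and> c \<le> i \<and> i < c + block_len N"
  using assms
proof (induction n arbitrary: i rule: dec_induct)
  case base
  then show ?case using occurs_at_refl by auto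
next
  case (step n)
  show ?case
  proof (cases "i < block_len n")
    case True
    with step show ?thesis by (auto simp: nth_block_Suc intro: occurs_at_Suc_first)
  next
    case False
    with step.prems have "i \<ge> block_period n" "block n ! (i - block_period n)"
      "i - block_period n < block_len n"
      by (auto simp: nth_block_Suc block_len_Suc)
    with step.IH obtain c where "occurs_at N n c" "c \<le> i - block_period n"
      "i - block_period n < c + block_len N"
      by blast
    with \<open>i \<ge> block_period n\<close> show ?thesis
      by (intro exI[of _ "c + block_period n"]) (auto intro: occurs_at_Suc_second)
  qed
qed

lemma occurs_at_all_residues:
  assumes "1 \<le> m" "m \<le> N + 2" "r \<le> t"
  shows "\<exists>c. occurs_at N (N + t) c \<and> c mod m = r mod m"
  using assms(3)
proof (induction t arbitrary: r)
  case 0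
  then show ?case using occurs_at_refl[of N] by auto
next
  case (Suc t)
  show ?case
  proof (cases "r \<le> t")
    case True
    then show ?thesis using Suc.IH occurs_at_Suc_first by fastforce
  next
    case False
    then have r: "r = Suc t" using Suc.prems by simp
    obtain c where c: "occurs_at N (N + t) c" "c mod m = t mod m"
      using Suc.IH[of t] by blast
    have "m dvd fact (N + t + 2)"
      using assms by (intro dvd_fact) auto
    then obtain w where "fact (N + t + 2) * block_len (N + t) = m * w"
      by (metis dvd_def mult.assoc)
    then have "(c + block_period (N + t)) mod m = Suc c mod m"
      by (simp add: block_period_def)
    also have "\<dots> = Suc t mod m"
      using c(2) by (metis mod_Suc_eq)
    finally have "(c + block_period (N + t)) mod m = Suc t mod m" .
    then show ?thesis using r occurs_at_Suc_second[OF c(1)] by auto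
  qed
qed

section \<open>The subshift\<close>

definition window_in_blocks :: "(int \<Rightarrow> bool) \<Rightarrow> int \<Rightarrow> nat \<Rightarrow> bool" where
  "window_in_blocks x a L \<longleftrightarrow>
     (\<exists>n q. q + L \<le> block_len n \<and> (\<forall>j<L. x (a + int j) = block n ! (q + j)))"

definition subshift :: "(int \<Rightarrow> bool) set" where
  "subshift = {x. \<forall>a L. window_in_blocks x a L}"

lemma subshiftD: "x \<in> subshift \<Longrightarrow> window_in_blocks x a L"
  by (simp add: subshift_def)

lemma zero_in_subshift: "(\<lambda>_. False) \<in> subshift"
  unfolding subshift_def window_in_blocks_def
proof (intro CollectI allI)
  fix a :: int and L :: nat
  have "block_len L + L \<le> block_len (Suc L)"
    using block_period_ge[of L] by (simp add: block_len_Suc)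
  moreover have "\<not> block (Suc L) ! (block_len L + j)" if "j < L" for j
    using that block_period_ge[of L] by (simp add: nth_block_Suc block_len_Suc)
  ultimately show "\<exists>n q. q + L \<le> block_len n \<and> (\<forall>j<L. False = block n ! (q + j))"
    by blast
qed

lemma shift_in_subshift: "x \<in> subshift \<Longrightarrow> (\<lambda>i. x (i + t)) \<in> subshift"
  unfolding subshift_def window_in_blocks_def
proof (intro CollectI allI)
  fix a L assume "x \<in> {x. \<forall>a L. \<exists>n q. q + L \<le> block_len n \<and>
      (\<forall>j<L. x (a + int j) = block n ! (q + j))}"
  then obtain n q where "q + L \<le> block_len n" "\<forall>j<L. x (a + t + int j) = block n ! (q + j)"
    by blast
  then show "\<exists>n q. q + L \<le> block_len n \<and> (\<forall>j<L. x (a + int j + t) = block n ! (q + j))"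
    by (intro exI[of _ n] exI[of _ q]) (simp add: ac_simps)
qed

lemma const_True_notin_subshift: "(\<lambda>_. True) \<notin> subshift"
proof
  assume "(\<lambda>_. True) \<in> subshift"
  then have "window_in_blocks (\<lambda>_. True) 0 2"
    by (rule subshiftD)
  then obtain n q where "q + 2 \<le> block_len n" "\<forall>j<2. block n ! (q + j)"
    unfolding window_in_blocks_def by auto
  then show False
    using block_no_adjacent_trues[of q n] by (auto dest: spec[of _ 0] spec[of _ 1])
qed

lemma subshift_contains_block:
  assumes "x \<in> subshift" "x p"
  shows "\<exists>P. \<forall>j<block_len N. x (P + int j) = block N ! j"
proof -
  obtain n q where nq: "q + (2 * block_len N + 1) \<le> block_len n"
    "\<forall>j<2 * block_len N + 1. x (p - int (block_len N) + int j) = block n ! (q + j)"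
    using subshiftD[OF assms(1)] unfolding window_in_blocks_def by blast
  have "block n ! (q + block_len N)"
    using nq(2)[rule_format, of "block_len N"] assms(2) by simp
  moreover have "N \<le> n"
    using nq(1) strict_mono_less_eq[OF block_len_strict_mono, of N n] by simp
  moreover have "q + block_len N < block_len n"
    using nq(1) by simp
  ultimately obtain c where c: "occurs_at N n c" "c \<le> q + block_len N" "q + block_len N < c + block_len N"
    using true_in_occurrence by blast
  show ?thesis
  proof (intro exI[of _ "p - int (block_len N) + int (c - q)"] allI impI)
    fix j assume j: "j < block_len N"
    then have "c - q + j < 2 * block_len N + 1"
      using c by linarith
    then have "x (p - int (block_len N) + int (c - q + j)) = block n ! (q + (c - q + j))"
      using nq(2) by blast
    moreover have "q + (c - q + j) = c + j"
      using c by linarith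
    moreover have "block n ! (c + j) = block N ! j"
      using c(1) j by (simp add: occurs_at_def)
    moreover have "p - int (block_len N) + int (c - q) + int j = p - int (block_len N) + int (c - q + j)"
      by simp
    ultimately show "x (p - int (block_len N) + int (c - q) + int j) = block N ! j"
      by (simp only:)
  qed
qed

text \<open>A \<open>True\<close> of \<open>x\<close> lies in a copy of \<open>block (N + m)\<close>, which contains copies of
  \<open>block N\<close>, hence of \<open>block n\<close>, at offsets in every residue class modulo \<open>m\<close>.\<close>

lemma subshift_contains_block_mod:
  assumes x: "x \<in> subshift" "x \<noteq> (\<lambda>_. False)" and m: "1 \<le> m"
  shows "\<exists>P. P mod int m = r mod int m \<and> (\<forall>j<block_len n. x (P + int j) = block n ! j)"
proof -
  obtain p where "x p"
    using x(2) by auto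
  define N where "N = max n m"
  obtain P where P: "\<forall>j<block_len (N + m). x (P + int j) = block (N + m) ! j"
    using subshift_contains_block[OF x(1) \<open>x p\<close>] by blast
  define c' where "c' = nat ((r - P) mod int m)"
  have c': "int c' = (r - P) mod int m" "c' < m"
    using m by (auto simp: c'_def nat_less_iff)
  have "m \<le> N + 2"
    by (simp add: N_def)
  then obtain c where c: "occurs_at N (N + m) c" "c mod m = c' mod m"
    using occurs_at_all_residues[OF m, of N c' m] c'(2) by auto
  have "int c mod int m = (r - P) mod int m"
    using c(2) c' by (metis mod_less of_nat_mod)
  then have "(P + int c) mod int m = (P + (r - P)) mod int m"
    by (metis mod_add_right_eq)
  then have "(P + int c) mod int m = r mod int m"
    by simp
  moreover have "occurs_at n (N + m) c"
    using occurs_at_trans[OF c(1) occurs_at_0[of n N]] by (simp add: N_def)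
  then have "x (P + int c + int j) = block n ! j" if "j < block_len n" for j
  proof -
    have "c + j < block_len (N + m)" "block (N + m) ! (c + j) = block n ! j"
      using \<open>occurs_at n (N + m) c\<close> that unfolding occurs_at_def by auto
    then show ?thesis
      using P[rule_format, of "c + j"] by (simp add: add.assoc)
  qed
  ultimately show ?thesis
    by blast
qed

lemma subshift_approx_by_shifts:
  assumes x: "x \<in> subshift" "x \<noteq> (\<lambda>_. False)" and z: "z \<in> subshift" and m: "1 \<le> m"
  shows "\<exists>k. \<forall>i. \<bar>i\<bar> \<le> int M \<longrightarrow> x (i + int m * k) = z i"
proof -
  obtain n q where nq: "q + (2 * M + 1) \<le> block_len n"
      "\<forall>j<2 * M + 1. z (- int M + int j) = block n ! (q + j)"
    using subshiftD[OF z] unfolding window_in_blocks_def by blast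
  obtain P where P: "P mod int m = (- int q - int M) mod int m"
    "\<forall>j<block_len n. x (P + int j) = block n ! j"
    using subshift_contains_block_mod[OF x m] by blast
  then have "int m dvd P - (- int q - int M)"
    by (simp only: mod_eq_dvd_iff)
  then obtain k where "P - (- int q - int M) = int m * k"
    unfolding dvd_def by blast
  then have k: "P + int q + int M = int m * k"
    by simp
  show ?thesis
  proof (intro exI[of _ k] allI impI)
    fix i assume i: "\<bar>i\<bar> \<le> int M"
    define j where "j = nat (i + int M)"
    have j: "j < 2 * M + 1" "int j = i + int M"
      using i by (auto simp: j_def)
    then have "q + j < block_len n"
      using nq(1) by linarith
    then have "x (P + int (q + j)) = block n ! (q + j)"
      using P(2) by blast
    moreover have "z i = block n ! (q + j)"
      using nq(2)[rule_format, OF j(1)] j(2) by simp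
    ultimately have "x (P + int (q + j)) = z i"
      by simp
    moreover have "P + int (q + j) = i + int m * k"
      using k j(2) by simp
    ultimately show "x (i + int m * k) = z i"
      by simp
  qed
qed

lemma periodic_int_mult:
  fixes x :: "int \<Rightarrow> 'a"
  assumes "\<And>i. x (i + t) = x i"
  shows "x (i + k * t) = x i"
proof (induction k rule: int_induct[of _ 0])
  case (step1 k)
  have "x (i + (k + 1) * t) = x ((i + k * t) + t)"
    by (simp add: algebra_simps)
  then show ?case using assms step1 by simp
next
  case (step2 k)
  have "x (i + k * t) = x ((i + (k - 1) * t) + t)"
    by (simp add: algebra_simps)
  then show ?case using assms step2 by simp
qed simp

text \<open>A period \<open>N\<close> is impossible because \<open>block (Suc N)\<close> contains a run of \<open>N\<close> \<open>False\<close>s.\<close>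

lemma subshift_aperiodic:
  assumes "x \<in> subshift" "x \<noteq> (\<lambda>_. False)" "t \<noteq> 0"
  shows "\<exists>i. x (i + t) \<noteq> x i"
proof (rule ccontr)
  assume "\<not> ?thesis"
  then have per: "x (i + t) = x i" for i by auto
  obtain p where p: "x p" using assms(2) by auto
  define N where "N = nat \<bar>t\<bar>"
  have N: "N > 0" using assms(3) by (simp add: N_def)
  have perN: "x (i + int N) = x i" for i
    using per[of i] per[of "i + int N"] by (cases "t > 0") (auto simp: N_def)
  obtain P where P: "\<forall>j<block_len (Suc N). x (P + int j) = block (Suc N) ! j"
    using subshift_contains_block[OF assms(1) p] by blast
  define b where "b = P + int (block_len N)"
  have run: "\<not> x (b + int j)" if "j < N" for j
  proof -
    have "block_len N + j < block_period N"
      using block_period_ge[of N] that by linarith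
    then have "block_len N + j < block_len (Suc N)" "\<not> block (Suc N) ! (block_len N + j)"
      by (auto simp: nth_block_Suc block_len_Suc)
    then show ?thesis
      using P by (auto simp: b_def add.assoc)
  qed
  have "x p = x (b + (p - b) mod int N)"
    using periodic_int_mult[of x "int N" "b + (p - b) mod int N" "(p - b) div int N", OF perN]
    by (simp add: algebra_simps)
  moreover have "0 \<le> (p - b) mod int N" "(p - b) mod int N < int N"
    using N by simp_all
  then have "\<not> x (b + (p - b) mod int N)"
    using run[of "nat ((p - b) mod int N)"] by simp
  ultimately show False
    using p by simp
qed

lemma subshift_shift_fixed:
  assumes "x \<in> subshift" "\<And>i. x (i + 1) = x i"
  shows "x = (\<lambda>_. False)"
proof -
  have const: "x i = x 0" for i
    using periodic_int_mult[of x 1 0 i] assms(2) by simp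
  have "\<not> x 0"
  proof
    assume "x 0"
    then have "x = (\<lambda>_. True)"
      using const by auto
    then show False
      using assms(1) const_True_notin_subshift by simp
  qed
  then show ?thesis
    using const by auto
qed

text \<open>Since each block is a prefix of the next, \<open>seed\<close> is the limit of the blocks on the
  right, padded with \<open>False\<close> on the left. Each window of it lies in some \<open>block (Suc n)\<close>,
  straddling the gap before the second copy of \<open>block n\<close>.\<close>

definition seed :: "int \<Rightarrow> bool" where
  "seed i \<longleftrightarrow> 0 \<le> i \<and> block (nat i) ! nat i"

lemma seed_0: "seed 0"
  by (simp add: seed_def)

lemma seed_in_subshift: "seed \<in> subshift"
  unfolding subshift_def
proof (intro CollectI allI)
  fix a :: int and L :: nat
  define n where "n = nat \<bar>a\<bar> + L"
  have len: "block_len n \<ge> n + 1" by (rule block_len_ge)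
  have per: "block_period n \<ge> block_len n + n + 2" by (rule block_period_ge)
  define q where "q = nat (int (block_period n) + a)"
  have q: "int q = int (block_period n) + a"
    using per by (simp add: q_def n_def)
  show "window_in_blocks seed a L"
    unfolding window_in_blocks_def
  proof (intro exI conjI allI impI)
    have "int (nat \<bar>a\<bar>) = \<bar>a\<bar>"
      by simp
    then have "int q + int L \<le> int (block_period n) + int (block_len n)"
      using q len n_def abs_ge_self[of a] by linarith
    then show "q + L \<le> block_len (Suc n)"
      by (simp add: block_len_Suc)
    fix j assume j: "j < L"
    show "seed (a + int j) = block (Suc n) ! (q + j)"
    proof (cases "a + int j < 0")
      case True
      then have "block_len n \<le> q + j" "q + j < block_period n"
        using q per n_def by linarith+
      then show ?thesis
        using True by (simp add: seed_def nth_block_Suc block_len_Suc)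
    next
      case False
      define t where "t = nat (a + int j)"
      have t: "q + j = block_period n + t" "t \<le> n"
        using False q j by (auto simp: t_def n_def)
      then have "block (Suc n) ! (q + j) = block n ! t"
        using len per by (simp add: nth_block_Suc block_len_Suc)
      also have "\<dots> = block t ! t"
        using block_prefix[of t n t] t(2) block_len_ge[of t] by simp
      finally show ?thesis
        using False by (simp add: seed_def t_def)
    qed
  qed
qed

lemma subshift_perfect:
  assumes "x \<in> subshift"
  shows "\<exists>y\<in>subshift. y \<noteq> x \<and> (\<forall>i. \<bar>i\<bar> \<le> int M \<longrightarrow> y i = x i)"
proof (cases "x = (\<lambda>_. False)")
  case True
  have "seed \<noteq> (\<lambda>_. False)"
    using seed_0 by (auto dest: fun_cong[of _ _ 0])
  then obtain k where k: "\<forall>i. \<bar>i\<bar> \<le> int M \<longrightarrow> seed (i + k) = x i"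
    using subshift_approx_by_shifts[OF seed_in_subshift _ assms, of 1 M] by auto
  moreover have "(\<lambda>i. seed (i + k)) \<noteq> x"
    using True seed_0 by (metis add.left_inverse)
  ultimately show ?thesis
    using shift_in_subshift[OF seed_in_subshift] by blast
next
  case False
  text \<open>An odd shift of \<open>x\<close> that agrees with \<open>x\<close> near the origin; it differs from \<open>x\<close>
    by aperiodicity.\<close>
  obtain k where k: "\<forall>i. \<bar>i\<bar> \<le> int (M + 1) \<longrightarrow> x (i + int 2 * k) = x (i + 1)"
    using subshift_approx_by_shifts[OF assms False shift_in_subshift[OF assms, of 1], of 2 "M + 1"]
    by auto
  define y where "y = (\<lambda>i. x (i + (2 * k - 1)))"
  have "2 * k - 1 \<noteq> 0"
    by presburger
  then obtain i where "y i \<noteq> x i"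
    using subshift_aperiodic[OF assms False, of "2 * k - 1"] unfolding y_def by blast
  then have "y \<noteq> x"
    by auto
  moreover have "y i = x i" if "\<bar>i\<bar> \<le> int M" for i
    using k[rule_format, of "i - 1"] that unfolding y_def by (simp add: algebra_simps)
  ultimately show ?thesis
    using shift_in_subshift[OF assms] unfolding y_def by blast
qed

section \<open>Coding the Cantor set by binary sequences\<close>

definition agree :: "nat \<Rightarrow> (nat \<Rightarrow> 'a) \<Rightarrow> (nat \<Rightarrow> 'a) \<Rightarrow> bool" where
  "agree k x y \<longleftrightarrow> (\<forall>i<k. x i = y i)"

lemma agree_mono: "agree k x y \<Longrightarrow> j \<le> k \<Longrightarrow> agree j x y"
  by (auto simp: agree_def)

lemma agree_first_difference: "\<not> agree N d e \<Longrightarrow> \<exists>n<N. agree n d e \<and> d n \<noteq> e n"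
proof (induction N)
  case (Suc N)
  then show ?case
    by (cases "agree N d e") (auto simp: agree_def less_Suc_eq)
qed (simp add: agree_def)

definition ternary_digit :: "bool \<Rightarrow> real" where
  "ternary_digit b = (if b then 2 else 0)"

definition cantor_point :: "(nat \<Rightarrow> bool) \<Rightarrow> real" where
  "cantor_point d = (\<Sum>n. ternary_digit (d n) / 3 ^ Suc n)"

lemma sums_tail_thirds: "(\<lambda>n. 2 / 3 ^ Suc (n + N) :: real) sums (1 / 3 ^ N)"
proof -
  have "(\<lambda>n. (2 / 3 ^ Suc N) * (1 / 3 :: real) ^ n) sums ((2 / 3 ^ Suc N) * (1 / (1 - 1 / 3)))"
    by (intro sums_mult geometric_sums) simp
  moreover have "(\<lambda>n. (2 / 3 ^ Suc N) * (1 / 3 :: real) ^ n) = (\<lambda>n. 2 / 3 ^ Suc (n + N))"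
    by (auto simp: power_add power_one_over field_simps)
  ultimately show ?thesis
    by (simp add: field_simps)
qed

lemma
  fixes g :: "nat \<Rightarrow> real"
  assumes "\<And>n. \<bar>g n\<bar> \<le> 2 / 3 ^ Suc n"
  shows summable_thirds_bounded: "summable g"
    and tail_thirds_bounded: "\<bar>\<Sum>n. g (n + N)\<bar> \<le> 1 / 3 ^ N"
proof -
  have bound: "\<bar>g (n + N)\<bar> \<le> 2 / 3 ^ Suc (n + N)" for n N
    by (rule assms)
  have abs_summable: "summable (\<lambda>n. \<bar>g (n + N)\<bar>)" for N
    using bound by (intro summable_comparison_test'[OF sums_summable[OF sums_tail_thirds]]) auto
  show "summable g"
    using summable_rabs_cancel[OF abs_summable[of 0]] by simp
  have "\<bar>\<Sum>n. g (n + N)\<bar> \<le> (\<Sum>n. \<bar>g (n + N)\<bar>)"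
    by (rule summable_rabs[OF abs_summable])
  also have "\<dots> \<le> (\<Sum>n. 2 / 3 ^ Suc (n + N))"
    by (intro suminf_le bound abs_summable sums_summable[OF sums_tail_thirds])
  also have "\<dots> = 1 / 3 ^ N"
    using sums_tail_thirds by (rule sums_unique[symmetric])
  finally show "\<bar>\<Sum>n. g (n + N)\<bar> \<le> 1 / 3 ^ N" .
qed

lemma cantor_point_diff_tail:
  assumes "agree N d e"
  shows "cantor_point d - cantor_point e =
    (\<Sum>n. (ternary_digit (d (n + N)) - ternary_digit (e (n + N))) / 3 ^ Suc (n + N))"
proof -
  define g where "g n = (ternary_digit (d n) - ternary_digit (e n)) / 3 ^ Suc n" for n
  have digit_summable: "summable (\<lambda>n. ternary_digit (f n) / 3 ^ Suc n)" for f
    by (rule summable_thirds_bounded) (simp add: ternary_digit_def)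
  have "cantor_point d - cantor_point e = suminf g"
    unfolding cantor_point_def g_def diff_divide_distrib
    by (rule suminf_diff[OF digit_summable digit_summable])
  also have "\<dots> = (\<Sum>n. g (n + N)) + (\<Sum>i<N. g i)"
    by (rule suminf_split_initial_segment) (auto intro: summable_thirds_bounded simp: g_def ternary_digit_def)
  also have "(\<Sum>i<N. g i) = 0"
    using assms by (simp add: agree_def g_def)
  finally show ?thesis
    by (simp add: g_def)
qed

lemma cantor_point_close: "agree N d e \<Longrightarrow> \<bar>cantor_point d - cantor_point e\<bar> \<le> 1 / 3 ^ N"
  unfolding cantor_point_diff_tail
  by (rule tail_thirds_bounded[where g = "\<lambda>n. (ternary_digit (d n) - ternary_digit (e n)) / 3 ^ Suc n"])
     (simp add: ternary_digit_def)

text \<open>The first differing digit contributes \<open>2 / 3 ^ Suc n\<close>, the rest at most half of that.\<close>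

lemma cantor_point_far:
  assumes "agree n d e" "d n \<noteq> e n"
  shows "\<bar>cantor_point d - cantor_point e\<bar> \<ge> 1 / 3 ^ Suc n"
proof -
  define g where "g i = (ternary_digit (d (i + n)) - ternary_digit (e (i + n))) / 3 ^ Suc (i + n)" for i
  have "summable (\<lambda>i. (ternary_digit (d i) - ternary_digit (e i)) / 3 ^ Suc i)"
    by (rule summable_thirds_bounded) (simp add: ternary_digit_def)
  then have "summable g"
    unfolding g_def by (rule summable_iff_shift[THEN iffD2])
  then have "suminf g = g 0 + (\<Sum>i. g (Suc i))"
    by (simp add: suminf_split_head)
  moreover have "cantor_point d - cantor_point e = suminf g"
    unfolding g_def by (rule cantor_point_diff_tail[OF assms(1)])
  ultimately have "cantor_point d - cantor_point e = g 0 + (\<Sum>i. g (Suc i))"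
    by simp
  moreover have "\<bar>\<Sum>i. g (Suc i)\<bar> \<le> 1 / 3 ^ Suc n"
    using tail_thirds_bounded[where g = "\<lambda>i. (ternary_digit (d i) - ternary_digit (e i)) / 3 ^ Suc i" and N = "Suc n"]
    by (simp add: g_def ternary_digit_def)
  moreover have "\<bar>g 0\<bar> = 2 / 3 ^ Suc n"
    using assms(2) by (auto simp: g_def ternary_digit_def)
  ultimately show ?thesis
    by linarith
qed

lemma agree_if_cantor_point_close:
  assumes "\<bar>cantor_point d - cantor_point e\<bar> < 1 / 3 ^ N"
  shows "agree N d e"
proof (rule ccontr)
  assume "\<not> agree N d e"
  then obtain n where n: "n < N" "agree n d e" "d n \<noteq> e n"
    using agree_first_difference by blast
  have "(1 :: real) / 3 ^ N \<le> 1 / 3 ^ Suc n"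
    using n(1) by (intro divide_left_mono power_increasing) auto
  then show False
    using cantor_point_far[OF n(2,3)] assms by linarith
qed

lemma inj_cantor_point: "inj cantor_point"
proof (rule injI)
  fix d e assume "cantor_point d = cantor_point e"
  then have "agree N d e" for N
    by (intro agree_if_cantor_point_close) simp
  then show "d = e"
    by (auto simp: agree_def fun_eq_iff dest: spec[of _ "Suc _"])
qed

lemma cantor_set_eq_range: "cantor_set = range cantor_point"
proof
  show "cantor_set \<subseteq> range cantor_point"
  proof
    fix x assume "x \<in> cantor_set"
    then obtain d :: "nat \<Rightarrow> nat" where d: "\<forall>n. d n \<in> {0, 2}" "x = (\<Sum>n. real (d n) / 3 ^ Suc n)"
      unfolding cantor_set_def by blast
    have "real (d n) = ternary_digit (d n = 2)" for n
      using d(1)[rule_format, of n] by (auto simp: ternary_digit_def)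
    then have "x = cantor_point (\<lambda>n. d n = 2)"
      using d(2) by (simp add: cantor_point_def)
    then show "x \<in> range cantor_point"
      by blast
  qed
next
  show "range cantor_point \<subseteq> cantor_set"
  proof
    fix x assume "x \<in> range cantor_point"
    then obtain d where "x = cantor_point d"
      by blast
    moreover have "ternary_digit (d n) = real (if d n then 2 else 0)" for n
      by (simp add: ternary_digit_def)
    ultimately show "x \<in> cantor_set"
      unfolding cantor_set_def cantor_point_def
      by (intro CollectI exI[of _ "\<lambda>n. if d n then 2 else 0"]) auto
  qed
qed

lemma cantor_point_in_cantor_set: "cantor_point d \<in> cantor_set"
  by (simp add: cantor_set_eq_range)

definition cantor_digits :: "real \<Rightarrow> nat \<Rightarrow> bool" where
  "cantor_digits = inv cantor_point"

lemma cantor_digits_point [simp]: "cantor_digits (cantor_point d) = d"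
  by (simp add: cantor_digits_def inj_cantor_point)

lemma cantor_point_digits: "u \<in> cantor_set \<Longrightarrow> cantor_point (cantor_digits u) = u"
  by (simp add: cantor_digits_def cantor_set_eq_range f_inv_into_f)

definition agree_continuous :: "((nat \<Rightarrow> 'a) \<Rightarrow> (nat \<Rightarrow> 'b)) \<Rightarrow> bool" where
  "agree_continuous G \<longleftrightarrow> (\<forall>k. \<exists>l. \<forall>d e. agree l d e \<longrightarrow> agree k (G d) (G e))"

lemma inverse_power_three_less: "0 < (\<epsilon> :: real) \<Longrightarrow> \<exists>k. 1 / 3 ^ k < \<epsilon>"
  using real_arch_pow_inv[of \<epsilon> "1 / 3"] by (auto simp: power_one_over)

lemma continuous_on_cantor_conj:
  assumes "agree_continuous G"
  shows "continuous_on cantor_set (\<lambda>u. cantor_point (G (cantor_digits u)))"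
  unfolding continuous_on_iff
proof (intro ballI allI impI)
  fix u \<epsilon> assume u: "u \<in> cantor_set" and \<epsilon>: "(0 :: real) < \<epsilon>"
  obtain k where k: "1 / 3 ^ k < \<epsilon>"
    using inverse_power_three_less[OF \<epsilon>] by blast
  obtain l where l: "\<forall>d e. agree l d e \<longrightarrow> agree k (G d) (G e)"
    using assms unfolding agree_continuous_def by blast
  show "\<exists>\<delta>>0. \<forall>v\<in>cantor_set. dist v u < \<delta> \<longrightarrow>
      dist (cantor_point (G (cantor_digits v))) (cantor_point (G (cantor_digits u))) < \<epsilon>"
  proof (intro exI[of _ "1 / 3 ^ l"] conjI ballI impI)
    fix v assume v: "v \<in> cantor_set" "dist v u < 1 / 3 ^ l"
    then have "agree l (cantor_digits v) (cantor_digits u)"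
      using u by (intro agree_if_cantor_point_close) (simp add: cantor_point_digits dist_real_def)
    then have "\<bar>cantor_point (G (cantor_digits v)) - cantor_point (G (cantor_digits u))\<bar> \<le> 1 / 3 ^ k"
      using l cantor_point_close by blast
    then show "dist (cantor_point (G (cantor_digits v))) (cantor_point (G (cantor_digits u))) < \<epsilon>"
      using k by (simp add: dist_real_def)
  qed simp
qed

section \<open>Closed perfect sets of binary sequences\<close>

definition agree_closed :: "(nat \<Rightarrow> 'a) set \<Rightarrow> bool" where
  "agree_closed A \<longleftrightarrow> (\<forall>x. (\<forall>k. \<exists>y\<in>A. agree k x y) \<longrightarrow> x \<in> A)"

definition agree_perfect :: "(nat \<Rightarrow> 'a) set \<Rightarrow> bool" where
  "agree_perfect A \<longleftrightarrow> (\<forall>x\<in>A. \<forall>k. \<exists>y\<in>A. y \<noteq> x \<and> agree k x y)"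

text \<open>The relatively clopen subsets of \<open>A\<close>.\<close>

definition finitely_determined :: "(nat \<Rightarrow> 'a) set \<Rightarrow> (nat \<Rightarrow> 'a) set \<Rightarrow> bool" where
  "finitely_determined A Q \<longleftrightarrow> Q \<subseteq> A \<and> (\<exists>K. \<forall>x\<in>A. \<forall>y\<in>A. agree K x y \<longrightarrow> (x \<in> Q \<longleftrightarrow> y \<in> Q))"

lemma finitely_determined_closed:
  assumes "finitely_determined A Q" "z \<in> A" "\<And>k. \<exists>y\<in>Q. agree k z y"
  shows "z \<in> Q"
proof -
  obtain K where K: "\<forall>x\<in>A. \<forall>y\<in>A. agree K x y \<longrightarrow> (x \<in> Q \<longleftrightarrow> y \<in> Q)" "Q \<subseteq> A"
    using assms(1) unfolding finitely_determined_def by blast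
  obtain y where "y \<in> Q" "agree K z y"
    using assms(3) by blast
  then show ?thesis
    using K assms(2) by blast
qed

lemma finitely_determined_perfect:
  assumes "agree_perfect A" "finitely_determined A Q" "x \<in> Q"
  shows "\<exists>y\<in>Q. y \<noteq> x \<and> agree k x y"
proof -
  obtain K where K: "\<forall>x\<in>A. \<forall>y\<in>A. agree K x y \<longrightarrow> (x \<in> Q \<longleftrightarrow> y \<in> Q)" "Q \<subseteq> A"
    using assms(2) unfolding finitely_determined_def by blast
  with assms(3) have x: "x \<in> A"
    by blast
  with assms(1) obtain y where y: "y \<in> A" "y \<noteq> x" "agree (max k K) x y"
    unfolding agree_perfect_def by blast
  have "agree K x y" "agree k x y"
    by (rule agree_mono[OF y(3)]; simp)+
  with K(1) x y(1) assms(3) have "y \<in> Q"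
    by blast
  with y(2) \<open>agree k x y\<close> show ?thesis
    by blast
qed

definition split_index :: "(nat \<Rightarrow> 'a) set \<Rightarrow> nat" where
  "split_index Q = (LEAST i. \<exists>y\<in>Q. \<exists>z\<in>Q. y i \<noteq> z i)"

definition split_part :: "bool \<Rightarrow> (nat \<Rightarrow> bool) set \<Rightarrow> (nat \<Rightarrow> bool) set" where
  "split_part b Q = {x\<in>Q. x (split_index Q) = b}"

lemma split_index_splits:
  assumes "agree_perfect A" "finitely_determined A Q" "Q \<noteq> {}"
  shows "\<exists>y\<in>Q. \<exists>z\<in>Q. y (split_index Q) \<noteq> z (split_index Q)"
proof -
  obtain x where x: "x \<in> Q"
    using assms(3) by blast
  obtain y where "y \<in> Q" "y \<noteq> x"
    using finitely_determined_perfect[OF assms(1,2) x, of 0] by blast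
  then have "\<exists>i. \<exists>y\<in>Q. \<exists>z\<in>Q. y i \<noteq> z i"
    using x by (auto simp: fun_eq_iff)
  then show ?thesis
    unfolding split_index_def by (rule LeastI_ex)
qed

lemma agree_split_index: "y \<in> Q \<Longrightarrow> z \<in> Q \<Longrightarrow> agree (split_index Q) y z"
  unfolding agree_def split_index_def using not_less_Least by blast

lemma finitely_determined_split_part:
  assumes "finitely_determined A Q"
  shows "finitely_determined A (split_part b Q)"
proof -
  obtain K where K: "\<forall>x\<in>A. \<forall>y\<in>A. agree K x y \<longrightarrow> (x \<in> Q \<longleftrightarrow> y \<in> Q)" "Q \<subseteq> A"
    using assms unfolding finitely_determined_def by blast
  show ?thesis
    unfolding finitely_determined_def
  proof (intro conjI exI[of _ "max K (Suc (split_index Q))"] ballI impI)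
    show "split_part b Q \<subseteq> A"
      using K(2) by (auto simp: split_part_def)
    fix x y assume xy: "x \<in> A" "y \<in> A" "agree (max K (Suc (split_index Q))) x y"
    have "agree K x y"
      by (rule agree_mono[OF xy(3)]) simp
    with K(1) xy(1,2) have "x \<in> Q \<longleftrightarrow> y \<in> Q"
      by blast
    moreover have "x (split_index Q) = y (split_index Q)"
      using xy(3) by (simp add: agree_def)
    ultimately show "x \<in> split_part b Q \<longleftrightarrow> y \<in> split_part b Q"
      by (simp add: split_part_def)
  qed
qed

lemma split_part_nonempty:
  assumes "agree_perfect A" "finitely_determined A Q" "Q \<noteq> {}"
  shows "split_part b Q \<noteq> {}"
proof -
  obtain y z where "y \<in> Q" "z \<in> Q" "y (split_index Q) \<noteq> z (split_index Q)"
    using split_index_splits[OF assms] by blast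
  then show ?thesis
    by (cases "y (split_index Q) = b") (auto simp: split_part_def)
qed

primrec tree_node :: "(nat \<Rightarrow> bool) set \<Rightarrow> bool list \<Rightarrow> (nat \<Rightarrow> bool) set" where
  "tree_node A [] = A"
| "tree_node A (b # w) = split_part b (tree_node A w)"

text \<open>Addresses are written most recent choice first, so the node of the first \<open>n\<close> digits
  of \<open>d\<close> is \<open>tree_node A (rev (map d [0..<n]))\<close>.\<close>

lemma tree_node_antimono:
  "m \<le> n \<Longrightarrow> tree_node A (rev (map d [0..<n])) \<subseteq> tree_node A (rev (map d [0..<m]))"
proof (induction n rule: dec_induct)
  case (step n)
  have "tree_node A (rev (map d [0..<Suc n])) \<subseteq> tree_node A (rev (map d [0..<n]))"
    by (auto simp: split_part_def)
  with step.IH show ?case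
    by blast
qed simp

locale closed_perfect =
  fixes A :: "(nat \<Rightarrow> bool) set"
  assumes closed: "agree_closed A" and perfect: "agree_perfect A" and nonempty: "A \<noteq> {}"
begin

lemma tree_node_finitely_determined: "finitely_determined A (tree_node A w)"
  and tree_node_nonempty: "tree_node A w \<noteq> {}"
proof (induction w)
  case Nil
  show "finitely_determined A (tree_node A [])"
    unfolding finitely_determined_def by auto
  show "tree_node A [] \<noteq> {}"
    using nonempty by simp
next
  case (Cons b w)
  then show "finitely_determined A (tree_node A (b # w))" "tree_node A (b # w) \<noteq> {}"
    using finitely_determined_split_part split_part_nonempty[OF perfect] by simp_all
qed

lemma tree_node_subset: "tree_node A w \<subseteq> A"
  using tree_node_finitely_determined unfolding finitely_determined_def by blast

text \<open>A node at depth \<open>n\<close> has been split \<open>n\<close> times, at strictly increasing indices.\<close>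

lemma tree_node_agree: "y \<in> tree_node A w \<Longrightarrow> z \<in> tree_node A w \<Longrightarrow> agree (length w) y z"
proof (induction w arbitrary: y z)
  case (Cons b w)
  let ?Q = "tree_node A w"
  obtain y' z' where yz': "y' \<in> ?Q" "z' \<in> ?Q" "y' (split_index ?Q) \<noteq> z' (split_index ?Q)"
    using split_index_splits[OF perfect tree_node_finitely_determined tree_node_nonempty] by blast
  have "\<not> split_index ?Q < length w"
    using Cons.IH[OF yz'(1,2)] yz'(3) by (auto simp: agree_def)
  then have "i < split_index ?Q \<or> i = split_index ?Q" if "i < length (b # w)" for i
    using that by auto
  moreover have "y \<in> ?Q" "z \<in> ?Q" "y (split_index ?Q) = z (split_index ?Q)"
    using Cons.prems by (auto simp: split_part_def)
  moreover have "agree (split_index ?Q) y z"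
    using calculation(2,3) by (rule agree_split_index)
  ultimately show ?case
    unfolding agree_def by blast
qed (simp add: agree_def)

end

definition tree_point :: "(nat \<Rightarrow> bool) set \<Rightarrow> (nat \<Rightarrow> bool) \<Rightarrow> nat \<Rightarrow> bool" where
  "tree_point A d = (THE x. \<forall>n. x \<in> tree_node A (rev (map d [0..<n])))"

primrec address_path :: "(nat \<Rightarrow> bool) set \<Rightarrow> (nat \<Rightarrow> bool) \<Rightarrow> nat \<Rightarrow> bool list" where
  "address_path A x 0 = []"
| "address_path A x (Suc n) = x (split_index (tree_node A (address_path A x n))) # address_path A x n"

definition tree_address :: "(nat \<Rightarrow> bool) set \<Rightarrow> (nat \<Rightarrow> bool) \<Rightarrow> nat \<Rightarrow> bool" where
  "tree_address A x n = x (split_index (tree_node A (address_path A x n)))"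

lemma length_address_path [simp]: "length (address_path A x n) = n"
  by (induction n) simp_all

lemma rev_map_tree_address: "rev (map (tree_address A x) [0..<n]) = address_path A x n"
  by (induction n) (simp_all add: tree_address_def)

lemma in_tree_node_address_path: "x \<in> A \<Longrightarrow> x \<in> tree_node A (address_path A x n)"
  by (induction n) (simp_all add: split_part_def)

text \<open>Only the finitely many split indices of nodes of depth \<open>< k\<close> are read.\<close>

lemma agree_continuous_tree_address: "agree_continuous (tree_address A)"
  unfolding agree_continuous_def
proof
  fix k
  define l where "l = Suc (Max ((\<lambda>w. split_index (tree_node A w)) ` {w. length w < k}))"
  have "finite {w :: bool list. length w < k}"
    using finite_lists_length_le[of "UNIV :: bool set" k] by (rule rev_finite_subset) auto
  then have l: "split_index (tree_node A w) < l" if "length w < k" for w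
    using that unfolding l_def by (simp add: le_imp_less_Suc)
  show "\<exists>l. \<forall>x y :: nat \<Rightarrow> bool. agree l x y \<longrightarrow> agree k (tree_address A x) (tree_address A y)"
  proof (intro exI[of _ l] allI impI)
    fix x y :: "nat \<Rightarrow> bool"
    assume xy: "agree l x y"
    have path: "address_path A x n = address_path A y n" if "n \<le> k" for n
      using that
    proof (induction n)
      case (Suc n)
      then show ?case
        using l[of "address_path A x n"] xy by (simp add: agree_def length_address_path)
    qed simp
    show "agree k (tree_address A x) (tree_address A y)"
      unfolding agree_def tree_address_def
      using path l xy by (simp add: agree_def length_address_path)
  qed
qed

context closed_perfect
begin

lemma ex1_in_tree_branch: "\<exists>!x. \<forall>n. x \<in> tree_node A (rev (map d [0..<n]))"
proof (rule ex_ex1I)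
  let ?node = "\<lambda>n. tree_node A (rev (map d [0..<n]))"
  define xs where "xs n = (SOME x. x \<in> ?node n)" for n
  have xs: "xs n \<in> ?node n" for n
    unfolding xs_def using tree_node_nonempty by (simp add: some_in_eq)
  define z where "z i = xs (Suc i) i" for i
  have agree_z: "agree k z (xs k)" for k
    unfolding agree_def
  proof (intro allI impI)
    fix i assume "i < k"
    then have "xs k \<in> ?node (Suc i)"
      using tree_node_antimono[of "Suc i" k A d] xs by auto
    then show "z i = xs k i"
      using tree_node_agree[OF xs[of "Suc i"]] by (simp add: z_def agree_def)
  qed
  have "z \<in> A"
    using closed agree_z xs tree_node_subset unfolding agree_closed_def by blast
  moreover have "\<exists>y\<in>?node n. agree k z y" for n k
    using agree_z[of "max n k"] agree_mono[of "max n k" z _ k] xs[of "max n k"]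
      tree_node_antimono[of n "max n k" A d] by auto
  ultimately have "z \<in> ?node n" for n
    using finitely_determined_closed[OF tree_node_finitely_determined] by blast
  then show "\<exists>x. \<forall>n. x \<in> ?node n"
    by blast
next
  fix x y assume x: "\<forall>n. x \<in> tree_node A (rev (map d [0..<n]))"
    and y: "\<forall>n. y \<in> tree_node A (rev (map d [0..<n]))"
  show "x = y"
  proof
    fix i
    show "x i = y i"
      using tree_node_agree[OF x[rule_format, of "Suc i"] y[rule_format, of "Suc i"]]
      by (simp add: agree_def)
  qed
qed

lemma tree_point_in_tree_node: "tree_point A d \<in> tree_node A (rev (map d [0..<n]))"
  using theI'[OF ex1_in_tree_branch] unfolding tree_point_def by blast

lemma tree_point_in: "tree_point A d \<in> A"
  using tree_point_in_tree_node[of d 0] by simp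

lemma tree_point_eqI: "(\<And>n. x \<in> tree_node A (rev (map d [0..<n]))) \<Longrightarrow> tree_point A d = x"
  using ex1_in_tree_branch tree_point_in_tree_node by blast

lemma agree_tree_point:
  assumes "agree k d e"
  shows "agree k (tree_point A d) (tree_point A e)"
proof -
  have "map e [0..<k] = map d [0..<k]"
    using assms by (simp add: agree_def)
  then have "tree_point A e \<in> tree_node A (rev (map d [0..<k]))"
    using tree_point_in_tree_node[of e k] by (simp only:)
  then show ?thesis
    using tree_node_agree[OF tree_point_in_tree_node[of d k]] by simp
qed

lemma tree_point_address: "x \<in> A \<Longrightarrow> tree_point A (tree_address A x) = x"
  by (rule tree_point_eqI) (simp add: rev_map_tree_address in_tree_node_address_path)

lemma tree_address_point [simp]: "tree_address A (tree_point A d) = d"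
proof -
  have path: "address_path A (tree_point A d) n = rev (map d [0..<n])" for n
  proof (induction n)
    case (Suc n)
    then show ?case
      using tree_point_in_tree_node[of d "Suc n"] by (simp add: split_part_def)
  qed simp
  show ?thesis
  proof
    fix n
    show "tree_address A (tree_point A d) n = d n"
      using tree_point_in_tree_node[of d "Suc n"] path[of n] by (simp add: tree_address_def split_part_def)
  qed
qed

end

section \<open>The subshift as a closed perfect set of binary sequences\<close>

lemma int_encode_le: "int_encode i \<le> 2 * nat \<bar>i\<bar>"
  by (simp add: int_encode_def sum_encode_def) arith

lemma abs_int_decode_le: "\<bar>int_decode n\<bar> \<le> int n"
  by (simp add: int_decode_def sum_decode_def) presburger

lemma nat_abs_int_decode_le: "nat \<bar>int_decode n\<bar> \<le> n"
  using abs_int_decode_le[of n] by (simp add: nat_le_iff)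

lemma nat_abs_add_le: "nat \<bar>a + b\<bar> \<le> nat \<bar>a\<bar> + nat \<bar>b\<bar>"
  by (simp add: nat_le_iff abs_triangle_ineq)

definition coded_subshift :: "(nat \<Rightarrow> bool) set" where
  "coded_subshift = {y. (\<lambda>i. y (int_encode i)) \<in> subshift}"

definition coded_shift :: "int \<Rightarrow> (nat \<Rightarrow> bool) \<Rightarrow> nat \<Rightarrow> bool" where
  "coded_shift s y n = y (int_encode (int_decode n + s))"

lemma in_coded_subshift: "x \<in> subshift \<Longrightarrow> (\<lambda>n. x (int_decode n)) \<in> coded_subshift"
  by (simp add: coded_subshift_def)

lemma agree_closed_coded_subshift: "agree_closed coded_subshift"
  unfolding agree_closed_def
proof (intro allI impI)
  fix y assume approx: "\<forall>k. \<exists>y'\<in>coded_subshift. agree k y y'"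
  have "window_in_blocks (\<lambda>i. y (int_encode i)) a L" for a L
  proof -
    obtain y' where y': "y' \<in> coded_subshift" "agree (2 * (nat \<bar>a\<bar> + L) + 1) y y'"
      using approx by blast
    have "int_encode (a + int j) < 2 * (nat \<bar>a\<bar> + L) + 1" if "j < L" for j
      using int_encode_le[of "a + int j"] nat_abs_add_le[of a "int j"] that by simp
    then have "y (int_encode (a + int j)) = y' (int_encode (a + int j))" if "j < L" for j
      using y'(2) that by (simp add: agree_def)
    moreover have "window_in_blocks (\<lambda>i. y' (int_encode i)) a L"
      using y'(1) by (simp add: coded_subshift_def subshiftD)
    ultimately show ?thesis
      unfolding window_in_blocks_def by simp
  qed
  then show "y \<in> coded_subshift"
    unfolding coded_subshift_def subshift_def by blast
qed

lemma agree_perfect_coded_subshift: "agree_perfect coded_subshift"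
  unfolding agree_perfect_def
proof (intro ballI allI)
  fix y k assume "y \<in> coded_subshift"
  then obtain x where x: "x \<in> subshift" "x \<noteq> (\<lambda>i. y (int_encode i))"
      "\<forall>i. \<bar>i\<bar> \<le> int k \<longrightarrow> x i = y (int_encode i)"
    using subshift_perfect[of "\<lambda>i. y (int_encode i)" k] by (auto simp: coded_subshift_def)
  have "(\<lambda>n. x (int_decode n)) \<noteq> y"
    using x(2) by auto
  moreover have "y n = x (int_decode n)" if "n < k" for n
  proof -
    have "\<bar>int_decode n\<bar> \<le> int k"
      using abs_int_decode_le[of n] that by linarith
    then show ?thesis
      using x(3) by simp
  qed
  then have "agree k y (\<lambda>n. x (int_decode n))"
    by (simp add: agree_def)
  ultimately show "\<exists>y'\<in>coded_subshift. y' \<noteq> y \<and> agree k y y'"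
    using in_coded_subshift[OF x(1)] by blast
qed

interpretation coded: closed_perfect coded_subshift
  using agree_closed_coded_subshift agree_perfect_coded_subshift in_coded_subshift[OF zero_in_subshift]
  by unfold_locales auto

lemma coded_shift_in: "y \<in> coded_subshift \<Longrightarrow> coded_shift s y \<in> coded_subshift"
  using shift_in_subshift[of "\<lambda>i. y (int_encode i)" s] by (simp add: coded_subshift_def coded_shift_def)

lemma coded_shift_add: "coded_shift a (coded_shift b y) = coded_shift (a + b) y"
  by (simp add: coded_shift_def fun_eq_iff add.assoc)

lemma coded_shift_0: "coded_shift 0 y = y"
  by (rule ext) (simp add: coded_shift_def)

lemma agree_continuous_coded_shift: "agree_continuous (coded_shift s)"
  unfolding agree_continuous_def
proof (intro allI exI[of _ "2 * (k + nat \<bar>s\<bar>) + 1" for k] impI)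
  fix k and d e :: "nat \<Rightarrow> bool"
  assume de: "agree (2 * (k + nat \<bar>s\<bar>) + 1) d e"
  have "int_encode (int_decode n + s) < 2 * (k + nat \<bar>s\<bar>) + 1" if "n < k" for n
    using int_encode_le[of "int_decode n + s"] nat_abs_add_le[of "int_decode n" s]
      nat_abs_int_decode_le[of n] that by simp
  then show "agree k (coded_shift s d) (coded_shift s e)"
    using de by (simp add: agree_def coded_shift_def)
qed

section \<open>The homeomorphism of the Cantor set\<close>

lemma int_iter_group_action:
  assumes zero: "\<And>x. x \<in> X \<Longrightarrow> F 0 x = x"
    and add: "\<And>a b x. x \<in> X \<Longrightarrow> F a (F b x) = F (a + b) x"
    and x: "x \<in> X"
  shows "int_iter (F 1) (F (- 1)) k x = F k x"
proof -
  have forward: "(F 1 ^^ j) x = F (int j) x" for j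
    by (induction j) (simp_all add: zero[OF x] add[OF x] add.commute)
  have backward: "(F (- 1) ^^ j) x = F (- int j) x" for j
    by (induction j) (simp_all add: zero[OF x] add[OF x] add.commute)
  show ?thesis
    by (cases "k \<ge> 0") (simp_all add: int_iter_def forward backward)
qed

lemma homeomorphism_group_action:
  fixes F :: "int \<Rightarrow> 'a::topological_space \<Rightarrow> 'a"
  assumes closed: "\<And>a x. x \<in> X \<Longrightarrow> F a x \<in> X"
    and zero: "\<And>x. x \<in> X \<Longrightarrow> F 0 x = x"
    and add: "\<And>a b x. x \<in> X \<Longrightarrow> F a (F b x) = F (a + b) x"
    and "continuous_on X (F 1)" "continuous_on X (F (- 1))"
  shows "homeomorphism X X (F 1) (F (- 1))"
  by (rule homeomorphismI) (use assms in auto)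

definition digit_flow :: "int \<Rightarrow> (nat \<Rightarrow> bool) \<Rightarrow> nat \<Rightarrow> bool" where
  "digit_flow s d = tree_address coded_subshift (coded_shift s (tree_point coded_subshift d))"

lemma digit_flow_0: "digit_flow 0 d = d"
  by (simp add: digit_flow_def coded_shift_0)

lemma digit_flow_add: "digit_flow a (digit_flow b d) = digit_flow (a + b) d"
  by (simp add: digit_flow_def coded.tree_point_address coded_shift_in coded.tree_point_in coded_shift_add)

lemma agree_continuous_digit_flow: "agree_continuous (digit_flow s)"
  unfolding agree_continuous_def
proof
  fix k
  obtain l1 where l1: "\<forall>x y. agree l1 x y \<longrightarrow> agree k (tree_address coded_subshift x) (tree_address coded_subshift y)"
    using agree_continuous_tree_address unfolding agree_continuous_def by blast
  obtain l2 where l2: "\<forall>d e. agree l2 d e \<longrightarrow> agree l1 (coded_shift s d) (coded_shift s e)"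
    using agree_continuous_coded_shift unfolding agree_continuous_def by blast
  show "\<exists>l. \<forall>d e. agree l d e \<longrightarrow> agree k (digit_flow s d) (digit_flow s e)"
    unfolding digit_flow_def using l1 l2 coded.agree_tree_point by blast
qed

definition cantor_flow :: "int \<Rightarrow> real \<Rightarrow> real" where
  "cantor_flow s u = cantor_point (digit_flow s (cantor_digits u))"

lemma cantor_flow_in: "cantor_flow s u \<in> cantor_set"
  by (simp add: cantor_flow_def cantor_point_in_cantor_set)

lemma cantor_flow_0: "u \<in> cantor_set \<Longrightarrow> cantor_flow 0 u = u"
  by (simp add: cantor_flow_def digit_flow_0 cantor_point_digits)

lemma cantor_flow_add: "cantor_flow a (cantor_flow b u) = cantor_flow (a + b) u"
  by (simp add: cantor_flow_def digit_flow_add)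

lemma continuous_on_cantor_flow: "continuous_on cantor_set (cantor_flow s)"
  unfolding cantor_flow_def by (rule continuous_on_cantor_conj[OF agree_continuous_digit_flow])

definition subshift_coding :: "real \<Rightarrow> int \<Rightarrow> bool" where
  "subshift_coding u i = tree_point coded_subshift (cantor_digits u) (int_encode i)"

lemma subshift_coding_in: "subshift_coding u \<in> subshift"
  using coded.tree_point_in unfolding coded_subshift_def subshift_coding_def by blast

lemma subshift_coding_flow: "subshift_coding (cantor_flow s u) i = subshift_coding u (i + s)"
  by (simp add: subshift_coding_def cantor_flow_def digit_flow_def coded.tree_point_address
      coded_shift_in coded.tree_point_in coded_shift_def)

lemma subshift_coding_inj:
  assumes "u \<in> cantor_set" "v \<in> cantor_set" "subshift_coding u = subshift_coding v"
  shows "u = v"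
proof -
  have "tree_point coded_subshift (cantor_digits u) = tree_point coded_subshift (cantor_digits v)"
    using fun_cong[OF assms(3), of "int_decode n" for n] by (auto simp: subshift_coding_def)
  then have "cantor_digits u = cantor_digits v"
    by (metis coded.tree_address_point)
  then show ?thesis
    using assms(1,2) by (metis cantor_point_digits)
qed

lemma subshift_coding_close:
  "\<exists>l. \<forall>u v. (\<forall>i. \<bar>i\<bar> \<le> int l \<longrightarrow> subshift_coding u i = subshift_coding v i) \<longrightarrow>
     \<bar>cantor_point (cantor_digits u) - cantor_point (cantor_digits v)\<bar> \<le> 1 / 3 ^ K"
proof -
  obtain l where l: "\<forall>x y. agree l x y \<longrightarrow> agree K (tree_address coded_subshift x) (tree_address coded_subshift y)"
    using agree_continuous_tree_address unfolding agree_continuous_def by blast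
  have "\<bar>cantor_point (cantor_digits u) - cantor_point (cantor_digits v)\<bar> \<le> 1 / 3 ^ K"
    if uv: "\<forall>i. \<bar>i\<bar> \<le> int l \<longrightarrow> subshift_coding u i = subshift_coding v i" for u v
  proof -
    have "agree l (tree_point coded_subshift (cantor_digits u)) (tree_point coded_subshift (cantor_digits v))"
      unfolding agree_def
    proof (intro allI impI)
      fix n assume "n < l"
      then have "\<bar>int_decode n\<bar> \<le> int l"
        using abs_int_decode_le[of n] by linarith
      then show "tree_point coded_subshift (cantor_digits u) n = tree_point coded_subshift (cantor_digits v) n"
        using uv[rule_format, of "int_decode n"] by (simp add: subshift_coding_def)
    qed
    then have "agree K (cantor_digits u) (cantor_digits v)"
      using l by fastforce
    then show ?thesis
      by (rule cantor_point_close)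
  qed
  then show ?thesis
    by blast
qed

definition fixed_point :: real where
  "fixed_point = cantor_point (tree_address coded_subshift (\<lambda>_. False))"

lemma fixed_point_in: "fixed_point \<in> cantor_set"
  by (simp add: fixed_point_def cantor_point_in_cantor_set)

lemma subshift_coding_fixed_point: "subshift_coding fixed_point = (\<lambda>_. False)"
  using coded.tree_point_address[OF in_coded_subshift[OF zero_in_subshift]]
  by (simp add: subshift_coding_def fixed_point_def fun_eq_iff)

lemma cantor_flow_fixed_point: "cantor_flow s fixed_point = fixed_point"
  by (rule subshift_coding_inj[OF cantor_flow_in fixed_point_in])
     (simp add: fun_eq_iff subshift_coding_flow subshift_coding_fixed_point)

lemma cantor_flow_fixed_unique:
  assumes "u \<in> cantor_set" "cantor_flow 1 u = u"
  shows "u = fixed_point"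
proof (rule subshift_coding_inj[OF assms(1) fixed_point_in])
  have "subshift_coding u (i + 1) = subshift_coding u i" for i
    using assms(2) subshift_coding_flow[of 1 u i] by simp
  then show "subshift_coding u = subshift_coding fixed_point"
    using subshift_shift_fixed[OF subshift_coding_in] subshift_coding_fixed_point by simp
qed

lemma cantor_flow_orbit_dense:
  assumes u: "u \<in> cantor_set" "u \<noteq> fixed_point" and m: "1 \<le> m" and v: "v \<in> cantor_set"
  shows "v \<in> closure {cantor_flow (int m * k) u | k. True}"
  unfolding closure_approachable
proof (intro allI impI)
  fix \<epsilon> :: real assume "0 < \<epsilon>"
  then obtain K where K: "1 / 3 ^ K < \<epsilon>"
    using inverse_power_three_less by blast
  obtain l where l: "\<forall>u v. (\<forall>i. \<bar>i\<bar> \<le> int l \<longrightarrow> subshift_coding u i = subshift_coding v i) \<longrightarrow>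
      \<bar>cantor_point (cantor_digits u) - cantor_point (cantor_digits v)\<bar> \<le> 1 / 3 ^ K"
    using subshift_coding_close by blast
  have "subshift_coding u \<noteq> (\<lambda>_. False)"
    using u subshift_coding_inj[OF u(1) fixed_point_in] subshift_coding_fixed_point by auto
  then obtain k where k: "\<forall>i. \<bar>i\<bar> \<le> int l \<longrightarrow> subshift_coding u (i + int m * k) = subshift_coding v i"
    using subshift_approx_by_shifts[OF subshift_coding_in _ subshift_coding_in m] by blast
  then have "\<bar>cantor_flow (int m * k) u - v\<bar> \<le> 1 / 3 ^ K"
    using l[rule_format, of "cantor_flow (int m * k) u" v] cantor_flow_in v
    by (simp add: subshift_coding_flow cantor_point_digits)
  with K have "dist (cantor_flow (int m * k) u) v < \<epsilon>"
    by (simp add: dist_real_def)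
  then show "\<exists>y\<in>{cantor_flow (int m * k) u | k. True}. dist y v < \<epsilon>"
    by blast
qed

theorem theorem6p1:
  shows "\<exists>T S. homeomorphism cantor_set cantor_set T S \<and>
           (\<exists>x0\<in>cantor_set. T x0 = x0 \<and> (\<forall>x\<in>cantor_set. T x = x \<longrightarrow> x = x0) \<and>
              (\<forall>x\<in>cantor_set - {x0}. \<forall>m::nat. m \<ge> 1 \<longrightarrow>
                  cantor_set \<subseteq> closure {int_iter T S (int m * k) x | k::int. True}))"
proof (intro exI conjI bexI ballI allI impI subsetI)
  show "homeomorphism cantor_set cantor_set (cantor_flow 1) (cantor_flow (- 1))"
    by (rule homeomorphism_group_action)
       (simp_all add: cantor_flow_in cantor_flow_0 cantor_flow_add continuous_on_cantor_flow)
  show "cantor_flow 1 fixed_point = fixed_point"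
    by (rule cantor_flow_fixed_point)
  show "x = fixed_point" if "x \<in> cantor_set" "cantor_flow 1 x = x" for x
    using that by (rule cantor_flow_fixed_unique)
  fix x v :: real and m :: nat
  assume "x \<in> cantor_set - {fixed_point}" "1 \<le> m" "v \<in> cantor_set"
  moreover have "int_iter (cantor_flow 1) (cantor_flow (- 1)) k x = cantor_flow k x" for k
    using calculation(1) by (intro int_iter_group_action[of cantor_set]) (auto simp: cantor_flow_0 cantor_flow_add)
  ultimately show "v \<in> closure {int_iter (cantor_flow 1) (cantor_flow (- 1)) (int m * k) x | k. True}"
    using cantor_flow_orbit_dense by simp
qed (rule fixed_point_in)

end
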